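(* Let $G$ be a finite group and $N\lhd G$ such that the short exact sequence $1\to N\to G\to G/N\to1$ splits. Then $\mathcal{K}_r^S(G/N)=1$ in the Burnside ring $\Omega(G)$.
   Context: $\Omega(G)$ is the Burnside ring of $G$ (Grothendieck ring of finite $G$-sets under disjoint union and Cartesian product), with dimension homomorphism $\alpha(X)=|X|$ and regular element $r=G/\{e\}$. $S=\{G/H_1,\dots,G/H_n\}$ where $H_1,\dots,H_n$ is a full set of representatives of the conjugacy classes of subgroups of $G$. For $x\in\Omega(G)$, $S(x)=\{s\in S: s\cdot x\in\mathbb{Z}r\}$, $\mathrm{Ind}(x)=\{m\in\mathbb{Z}: s\cdot x=m r \text{ for some } s\in S(x)\}$, and $\mathcal{K}_r^S(x)=\gcd(\mathrm{Ind}(x))$ (with $\mathcal{K}_r^S(x)=\infty$ if $S(x)=\emptyset$). *)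

theory Defs
  imports "HOL-Algebra.Algebra" "HOL-Library.Extended_Nat"
begin

text \<open>A (finite) G-set is represented by its carrier together with the action map.
  All G-sets built below are genuine actions of the group G.\<close>
type_synonym ('g,'x) gset = "'x set \<times> ('g \<Rightarrow> 'x \<Rightarrow> 'x)"

definition coset_gset :: "('g,'b) monoid_scheme \<Rightarrow> 'g set \<Rightarrow> ('g, 'g set) gset" where
  "coset_gset G H = ({a <#\<^bsub>G\<^esub> H | a. a \<in> carrier G}, \<lambda>g C. g <#\<^bsub>G\<^esub> C)"

definition gset_prod :: "('g,'x) gset \<Rightarrow> ('g,'y) gset \<Rightarrow> ('g,'x \<times> 'y) gset" where
  "gset_prod U V = (Sigma (fst U) (\<lambda>_. fst V), \<lambda>g (x,y). (snd U g x, snd V g y))"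

definition gset_sum :: "('g,'x) gset \<Rightarrow> ('g,'y) gset \<Rightarrow> ('g,'x + 'y) gset" where
  "gset_sum U V = (Inl ` fst U \<union> Inr ` fst V, \<lambda>g. map_sum (snd U g) (snd V g))"

definition gset_copies :: "nat \<Rightarrow> ('g,'x) gset \<Rightarrow> ('g, nat \<times> 'x) gset" where
  "gset_copies n U = (Sigma {..<n} (\<lambda>_. fst U), \<lambda>g (i,x). (i, snd U g x))"

definition gset_empty :: "('g,'x) gset" where
  "gset_empty = ({}, \<lambda>g x. x)"

definition gset_iso :: "('g,'b) monoid_scheme \<Rightarrow> ('g,'x) gset \<Rightarrow> ('g,'y) gset \<Rightarrow> bool" where
  "gset_iso G U V \<longleftrightarrow> (\<exists>f. bij_betw f (fst U) (fst V) \<and>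
      (\<forall>g\<in>carrier G. \<forall>x\<in>fst U. f (snd U g x) = snd V g (f x)))"

text \<open>Elements of the Burnside ring (Grothendieck ring) are formal differences [P] - [Q]
  of finite G-sets; [P] - [Q] = [P'] - [Q'] iff P + Q' and P' + Q are isomorphic
  (the monoid of isomorphism classes of finite G-sets is cancellative).\<close>
definition burnside_eq :: "('g,'b) monoid_scheme \<Rightarrow> ('g,'x) gset \<times> ('g,'y) gset
      \<Rightarrow> ('g,'z) gset \<times> ('g,'w) gset \<Rightarrow> bool" where
  "burnside_eq G A B \<longleftrightarrow>
     gset_iso G (gset_sum (fst A) (snd B)) (gset_sum (fst B) (snd A))"

definition reg_gset :: "('g,'b) monoid_scheme \<Rightarrow> ('g, 'g set) gset" where
  "reg_gset G = coset_gset G {\<one>\<^bsub>G\<^esub>}"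

definition mult_reg :: "('g,'b) monoid_scheme \<Rightarrow> int
      \<Rightarrow> ('g, nat \<times> 'g set) gset \<times> ('g, nat \<times> 'g set) gset" where
  "mult_reg G m = (gset_copies (nat m) (reg_gset G), gset_copies (nat (- m)) (reg_gset G))"

definition burnside_prod_class :: "('g,'b) monoid_scheme \<Rightarrow> 'g set \<Rightarrow> ('g,'x) gset
      \<Rightarrow> ('g, 'g set \<times> 'x) gset \<times> ('g, 'g set \<times> 'x) gset" where
  "burnside_prod_class G H U = (gset_prod (coset_gset G H) U, gset_empty)"

definition conjugate_subgroups :: "('g,'b) monoid_scheme \<Rightarrow> 'g set \<Rightarrow> 'g set \<Rightarrow> bool" where
  "conjugate_subgroups G H K \<longleftrightarrow> (\<exists>g\<in>carrier G. K = (g <#\<^bsub>G\<^esub> H) #>\<^bsub>G\<^esub> inv\<^bsub>G\<^esub> g)"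

definition conj_class_reps :: "('g,'b) monoid_scheme \<Rightarrow> 'g set set \<Rightarrow> bool" where
  "conj_class_reps G Hs \<longleftrightarrow> (\<forall>H\<in>Hs. subgroup H G) \<and>
     (\<forall>K. subgroup K G \<longrightarrow> (\<exists>!H. H \<in> Hs \<and> conjugate_subgroups G H K))"

text \<open>S(x), indexed by the subgroups H in Hs (s = G/H).\<close>
definition S_of :: "('g,'b) monoid_scheme \<Rightarrow> 'g set set \<Rightarrow> ('g,'x) gset \<Rightarrow> 'g set set" where
  "S_of G Hs U = {H \<in> Hs. \<exists>m::int. burnside_eq G (burnside_prod_class G H U) (mult_reg G m)}"

definition Ind :: "('g,'b) monoid_scheme \<Rightarrow> 'g set set \<Rightarrow> ('g,'x) gset \<Rightarrow> int set" where
  "Ind G Hs U = {m. \<exists>H \<in> S_of G Hs U. burnside_eq G (burnside_prod_class G H U) (mult_reg G m)}"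

definition K_r :: "('g,'b) monoid_scheme \<Rightarrow> 'g set set \<Rightarrow> ('g,'x) gset \<Rightarrow> enat" where
  "K_r G Hs U = (if S_of G Hs U = {} then \<infinity> else enat (nat (Gcd (Ind G Hs U))))"

end

theory Submission
  imports Defs
begin

text \<open>The section \<sigma> of G \<rightarrow> G/N has image a complement K of N: K \<inter> N = 1 and
  |K| |N| = |G|. Its representative H in Hs is conjugate to K, so H is a complement too.
  For a complement H the map a \<mapsto> (aH, aN) is injective, hence by counting an equivariant
  bijection G/{e} \<cong> G/H \<times> G/N. Thus (G/H)(G/N) = 1 \<cdot> r, so 1 \<in> Ind(G/N) and its gcd is 1.\<close>

lemma burnside_eq_single_copy_if_iso:
  fixes U :: "('g,'x) gset" and V :: "('g,'y) gset" and W :: "('g,'w) gset"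
  assumes iso: "gset_iso G U V"
    and closed: "\<forall>g\<in>carrier G. \<forall>x\<in>fst U. snd U g x \<in> fst U"
  shows "burnside_eq G (V, gset_empty :: ('g,'z) gset) (gset_copies 1 U, gset_copies 0 W)"
proof -
  obtain f where bij: "bij_betw f (fst U) (fst V)"
    and eqv: "\<forall>g\<in>carrier G. \<forall>x\<in>fst U. f (snd U g x) = snd V g (f x)"
    using iso unfolding gset_iso_def by blast
  define f' where "f' = inv_into (fst U) f"
  have bij': "bij_betw f' (fst V) (fst U)"
    unfolding f'_def by (rule bij_betw_inv_into[OF bij])
  have eqv': "f' (snd V g y) = snd U g (f' y)" if "g \<in> carrier G" "y \<in> fst V" for g y
  proof -
    have "f' y \<in> fst U" "f (f' y) = y"
      using bij' bij that(2) unfolding f'_def by (auto simp: bij_betw_def bij_betw_inv_into_right)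
    then show ?thesis
      using eqv closed that(1) bij unfolding f'_def
      by (metis bij_betw_imp_inj_on inv_into_f_f)
  qed
  define F where "F = (\<lambda>z::'y + nat \<times> 'w. Inl (0::nat, f' (projl z)) :: (nat \<times> 'x) + 'z)"
  have dom: "fst (gset_sum V (gset_copies 0 W)) = Inl ` fst V"
    by (simp add: gset_sum_def gset_copies_def)
  have cod: "fst (gset_sum (gset_copies 1 U) (gset_empty :: ('g,'z) gset)) = Inl ` ({0} \<times> fst U)"
    by (auto simp: gset_sum_def gset_copies_def gset_empty_def)
  have "bij_betw F (Inl ` fst V) (Inl ` ({0} \<times> fst U))"
    using bij' unfolding bij_betw_def inj_on_def F_def by (auto simp: image_image)
  moreover have "F (snd (gset_sum V (gset_copies 0 W)) g z)
      = snd (gset_sum (gset_copies 1 U) (gset_empty :: ('g,'z) gset)) g (F z)"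
    if "g \<in> carrier G" "z \<in> Inl ` fst V" for g z
    using that eqv' by (auto simp: F_def gset_sum_def gset_copies_def)
  ultimately show ?thesis
    unfolding burnside_eq_def fst_conv snd_conv gset_iso_def dom cod by blast
qed

lemma K_r_eq_1_if_prod_class_eq_reg:
  assumes "H \<in> Hs" and "burnside_eq G (burnside_prod_class G H U) (mult_reg G 1)"
  shows "K_r G Hs U = 1"
proof -
  have S: "H \<in> S_of G Hs U" using assms unfolding S_of_def by blast
  then have "1 \<in> Ind G Hs U" using assms(2) unfolding Ind_def by blast
  then have "Gcd (Ind G Hs U) = 1"
    by (metis Gcd_dvd Gcd_int_greater_eq_0 zdvd1_eq abs_of_nonneg)
  then show ?thesis using S unfolding K_r_def by (auto simp: one_enat_def)
qed

context group
begin

lemma reg_gset_carrier: "fst (reg_gset G) = (\<lambda>a. {a}) ` carrier G"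
  by (auto simp: reg_gset_def coset_gset_def l_coset_def) (metis r_one)

lemma reg_gset_action: "snd (reg_gset G) g {a} = {g \<otimes> a}"
  by (simp add: reg_gset_def coset_gset_def l_coset_def)

lemma coset_gset_carrier: "fst (coset_gset G H) = lcosets H"
  by (auto simp: coset_gset_def LCOSETS_def)

lemma inj_on_coset_pair:
  assumes "subgroup H G" and "subgroup N G" and "H \<inter> N \<subseteq> {\<one>}"
  shows "inj_on (\<lambda>a. (a <# H, a <# N)) (carrier G)"
proof (rule inj_onI)
  fix a b assume a: "a \<in> carrier G" and b: "b \<in> carrier G"
    and eq: "(a <# H, a <# N) = (b <# H, b <# N)"
  then have "a \<in> b <# H" "a \<in> b <# N"
    using lcos_self assms(1,2) by (metis prod.inject)+
  then have "inv b \<otimes> a \<in> H \<inter> N"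
    using subgroup.lcos_module_imp[OF _ is_group b] assms(1,2) a by auto
  then have "inv b \<otimes> a = \<one>" using assms(3) by auto
  then show "a = b" using a b by (metis inv_equality inv_inv inv_closed)
qed

lemma card_lcosets_prod:
  assumes fin: "finite (carrier G)" and "subgroup H G" and "subgroup N G"
    and card: "card H * card N = order G"
  shows "card ((lcosets H) \<times> (lcosets N)) = order G"
proof -
  have "card H > 0"
    using assms(2) fin by (metis card_gt_0_iff empty_iff finite_subset subgroup.one_closed subgroup.subset)
  then have "card (lcosets H) = card N"
    using l_lagrange[OF fin assms(2)] card by (metis mult.commute mult_right_cancel less_not_refl2)
  then show ?thesis
    using l_lagrange[OF fin assms(3)] by (simp add: card_cartesian_product mult.commute)
qed

lemma reg_gset_iso_coset_prod:
  assumes fin: "finite (carrier G)" and H: "subgroup H G" and N: "subgroup N G"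
    and HN: "H \<inter> N \<subseteq> {\<one>}" and card: "card H * card N = order G"
  shows "gset_iso G (reg_gset G) (gset_prod (coset_gset G H) (coset_gset G N))"
proof -
  define f where "f = (\<lambda>S. (S <#> H, S <#> N))"
  have f_single: "f {a} = (a <# H, a <# N)" for a by (simp add: f_def l_coset_eq_set_mult)
  have "inj_on f (fst (reg_gset G))"
    using inj_on_coset_pair[OF H N HN] by (auto simp: inj_on_def reg_gset_carrier f_single)
  moreover have "f ` fst (reg_gset G) \<subseteq> (lcosets H) \<times> (lcosets N)"
    by (auto simp: reg_gset_carrier f_single LCOSETS_def)
  moreover have "card (fst (reg_gset G)) = order G"
    unfolding reg_gset_carrier order_def by (rule card_image) (simp add: inj_on_def)
  moreover have "finite ((lcosets H) \<times> (lcosets N))"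
    using fin by (simp add: LCOSETS_def)
  ultimately have "bij_betw f (fst (reg_gset G)) ((lcosets H) \<times> (lcosets N))"
    using card_lcosets_prod[OF fin H N card]
    by (metis bij_betw_def card_image card_subset_eq)
  moreover have "f (snd (reg_gset G) g x) = snd (gset_prod (coset_gset G H) (coset_gset G N)) g (f x)"
    if "g \<in> carrier G" "x \<in> fst (reg_gset G)" for g x
    using that subgroup.subset[OF H] subgroup.subset[OF N]
    by (auto simp: reg_gset_carrier reg_gset_action f_single gset_prod_def coset_gset_def lcos_m_assoc)
  ultimately show ?thesis
    unfolding gset_iso_def by (auto simp: gset_prod_def coset_gset_carrier)
qed

lemma burnside_coset_prod_eq_reg:
  assumes "finite (carrier G)" and "subgroup H G" and "subgroup N G"
    and "H \<inter> N \<subseteq> {\<one>}" and "card H * card N = order G"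
  shows "burnside_eq G (burnside_prod_class G H (coset_gset G N)) (mult_reg G 1)"
proof -
  have "\<forall>g\<in>carrier G. \<forall>x\<in>fst (reg_gset G). snd (reg_gset G) g x \<in> fst (reg_gset G)"
    by (auto simp: reg_gset_carrier reg_gset_action)
  then show ?thesis
    using burnside_eq_single_copy_if_iso[OF reg_gset_iso_coset_prod[OF assms]]
    by (simp add: burnside_prod_class_def mult_reg_def)
qed

lemma conjugate_subgroups_image:
  assumes "g \<in> carrier G" and "K = (g <# H) #> inv g"
  shows "K = (\<lambda>h. g \<otimes> h \<otimes> inv g) ` H"
  using assms by (auto simp: l_coset_def r_coset_def image_image)

lemma conjugate_cancel:
  assumes "g \<in> carrier G" "x \<in> carrier G" "y \<in> carrier G"
    and "g \<otimes> x \<otimes> inv g = g \<otimes> y \<otimes> inv g"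
  shows "x = y"
  using assms by (metis inv_closed m_closed l_cancel r_cancel)

lemma card_conjugate_subgroup:
  assumes H: "subgroup H G" and "conjugate_subgroups G H K"
  shows "card K = card H"
proof -
  obtain g where g: "g \<in> carrier G" "K = (g <# H) #> inv g"
    using assms(2) unfolding conjugate_subgroups_def by blast
  have "inj_on (\<lambda>h. g \<otimes> h \<otimes> inv g) H"
    using g(1) subgroup.subset[OF H] conjugate_cancel by (intro inj_onI) blast
  then show ?thesis
    using conjugate_subgroups_image[OF g] card_image by metis
qed

lemma conjugate_subgroup_inter_normal:
  assumes H: "subgroup H G" and "conjugate_subgroups G H K"
    and N: "N \<lhd> G" and KN: "K \<inter> N \<subseteq> {\<one>}"
  shows "H \<inter> N \<subseteq> {\<one>}"
proof
  fix h assume h: "h \<in> H \<inter> N"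
  obtain g where g: "g \<in> carrier G" "K = (g <# H) #> inv g"
    using assms(2) unfolding conjugate_subgroups_def by blast
  have "g \<otimes> h \<otimes> inv g \<in> K \<inter> N"
    using h g N conjugate_subgroups_image[OF g] by (auto intro: normal.inv_op_closed2)
  then have "g \<otimes> h \<otimes> inv g = g \<otimes> \<one> \<otimes> inv g" using KN g(1) by auto
  then show "h \<in> {\<one>}"
    using conjugate_cancel g(1) h subgroup.subset[OF H] by blast
qed

end

lemma (in normal) section_image_complement:
  assumes fin: "finite (carrier G)" and \<sigma>: "\<sigma> \<in> hom (G Mod H) G"
    and lift: "\<forall>C \<in> carrier (G Mod H). H #> \<sigma> C = C"
  shows "subgroup (\<sigma> ` carrier (G Mod H)) G"
    and "\<sigma> ` carrier (G Mod H) \<inter> H \<subseteq> {\<one>}"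
    and "card (\<sigma> ` carrier (G Mod H)) * card H = order G"
proof -
  have hom: "group_hom (G Mod H) G \<sigma>"
    using \<sigma> factorgroup_is_group by (simp add: group_hom_def group_hom_axioms_def is_group)
  show "subgroup (\<sigma> ` carrier (G Mod H)) G"
    by (rule group_hom.img_is_subgroup[OF hom])
  show "\<sigma> ` carrier (G Mod H) \<inter> H \<subseteq> {\<one>}"
  proof
    fix k assume "k \<in> \<sigma> ` carrier (G Mod H) \<inter> H"
    then obtain C where C: "C \<in> carrier (G Mod H)" "k = \<sigma> C" "k \<in> H" by auto
    then have "C = H" using lift rcos_const[OF is_group] by metis
    then show "k \<in> {\<one>}" using C group_hom.hom_one[OF hom] by simp
  qed
  have "inj_on \<sigma> (carrier (G Mod H))"
    using lift by (metis inj_onI)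
  then show "card (\<sigma> ` carrier (G Mod H)) * card H = order G"
    using lagrange_finite[OF fin is_subgroup] by (simp add: card_image FactGroup_def)
qed

theorem lemma3p4:
  fixes G :: "('g,'b) monoid_scheme" and N :: "'g set" and Hs :: "'g set set"
  assumes "group G" and "finite (carrier G)" and "N \<lhd> G"
    and "\<exists>\<sigma> \<in> hom (G Mod N) G. \<forall>C \<in> carrier (G Mod N). N #>\<^bsub>G\<^esub> \<sigma> C = C"
    and "conj_class_reps G Hs"
  shows "K_r G Hs (coset_gset G N) = 1"
proof -
  interpret normal N G by fact
  obtain \<sigma> where \<sigma>: "\<sigma> \<in> hom (G Mod N) G" "\<forall>C \<in> carrier (G Mod N). N #>\<^bsub>G\<^esub> \<sigma> C = C"
    using assms(4) by blast
  define K where "K = \<sigma> ` carrier (G Mod N)"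
  note K = section_image_complement[OF assms(2) \<sigma>, folded K_def]
  obtain H where H: "H \<in> Hs" "conjugate_subgroups G H K" "subgroup H G"
    using assms(5) K(1) unfolding conj_class_reps_def by blast
  have "H \<inter> N \<subseteq> {\<one>\<^bsub>G\<^esub>}"
    using conjugate_subgroup_inter_normal[OF H(3,2) assms(3) K(2)] .
  moreover have "card H * card N = order G"
    using card_conjugate_subgroup[OF H(3,2)] K(3) by simp
  ultimately show ?thesis
    using K_r_eq_1_if_prod_class_eq_reg[OF H(1)] burnside_coset_prod_eq_reg[OF assms(2) H(3) is_subgroup]
    by blast
qed

end
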